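(* For every set of formulas $\Gamma$ and formula $\varphi$: (1) $\Gamma\vdash_{\mathsf{NeL}+\{\mathrm{(DI)}^s\}}\varphi$ iff $\Gamma\models_{\mathfrak{N}_w^{d}}\varphi$; (2) $\Gamma\vdash_{\mathsf{NeL}^{\mathrm{as}}+\{\mathrm{(DI)}^s\}}\varphi$ iff $\Gamma\models_{\mathfrak{N}^{d}}\varphi$; (3) $\varphi$ is a theorem of $\mathsf{NL}+\{\mathrm{(DI)}\}$ iff $\models_{\mathfrak{N}_w^{d}}\varphi$; (4) $\varphi$ is a theorem of $\mathsf{NL}^{\mathrm{as}}+\{\mathrm{(DI)}\}$ iff $\models_{\mathfrak{N}^{d}}\varphi$.
   Context: Formulas are built from a countably infinite set of variables using binary $\otimes,\circ$ and unary ${}^{*}$; $\mathbf{Fm}$ is the formula algebra. Abbreviations (also term operations): $\varphi\Rightarrow\psi:=(\varphi\circ\psi^{*})^{*}$; $\varphi\Leftrightarrow\psi:=(\varphi\Rightarrow\psi)\otimes(\psi\Rightarrow\varphi)$; $\varphi\not\Leftrightarrow\psi:=(\varphi\Leftrightarrow\psi)^{*}$; $\varphi\not\Leftrightarrow\psi\not\Leftrightarrow\chi:=((\varphi\not\Leftrightarrow\psi)\otimes(\varphi\not\Leftrightarrow\chi))\otimes(\psi\not\Leftrightarrow\chi)$; $\varphi\oplus\psi:=(\varphi^{*}\otimes\psi^{*})^{*}$. Axiom schemes: (A1) $\varphi\Rightarrow\varphi$; (A2) $(\varphi\circ\psi)\Rightarrow(\psi\circ\varphi)$; (A3) $\varphi\Rightarrow\varphi^{**}$;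 (A4) $(\varphi\Rightarrow\psi)\Rightarrow(\varphi\circ\psi)$; (A5) $(\varphi\otimes\psi)\Leftrightarrow(\psi\otimes\varphi)$; (A6) $((\varphi\otimes\psi)\Rightarrow\chi)\Rightarrow((\varphi\otimes\chi^{*})\Rightarrow\psi^{*})$; (A7) $(\varphi\not\Leftrightarrow\psi\not\Leftrightarrow\chi)\Rightarrow((\varphi\Rightarrow\psi)\Rightarrow((\psi\Rightarrow\chi)\Rightarrow(\varphi\Rightarrow\chi)))$. $\mathsf{NL}$ has these axioms and rules applicable only to theorems: from theorems $\varphi\Rightarrow\psi$, $\varphi$ infer $\psi$; from theorems $\varphi,\psi$ infer $\varphi\otimes\psi$; from theorems $\varphi\Leftrightarrow\psi$ and $\chi$ infer $\chi'$ ($\chi'$ from $\chi$ replacing one or more occurrences of $\varphi$ by $\psi$); from a theorem $\varphi\otimes\psi$ infer $\varphi$. $\mathsf{NeL}$ has the same axioms and the same rules applicable to arbitrary formulas, with $\Gamma\vdash_{\mathsf{NeL}}\varphi$ meaning derivability from $\Gamma$. The superscript "as" means adding axiom schemes $(\varphi\otimes\psi)\otimes\chi\Rightarrow\varphi\otimes(\psi\otimes\chi)$ and $\varphi\otimes(\psi\otimes\chi)\Rightarrow(\varphi\otimes\psi)\otimes\chi$. (DI): from a theorem $\varphi$ infer $\varphi\oplus\psi$; $\mathrm{(DI)}^s$: the rule $\varphi/\varphi\oplus\psi$ for arbitrary formulas. A weak $\mathcal{N}$-algebra is an algebra $(A,\otimes,\circ,{}^{*})$ of type $(2,2,1)$ with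 $\otimes,\circ$ commutative, $x^{**}=x$, $(x\otimes y)\circ z=(x\otimes z)\circ y$; an $\mathcal{N}$-algebra has in addition $\otimes$ associative. With $\mathsf{t}\ne\mathsf{f}$ symbols not in $A$, $\overline A=A\cup\{\mathsf{t},\mathsf{f}\}$, an $\mathfrak{N}_w$-model is $(\mathbf A,\perp,\{\mathsf{t},\mathsf{f}\})$, $\mathbf A$ a weak $\mathcal{N}$-algebra, $\perp\subseteq\overline A\times\overline A$, such that for all $x,y,z\in A$: (a) $x\perp x^{*}$; (b) $x\perp y^{*}$ and $y\perp x^{*}$ imply $x=y$; (c) $x\perp y$ iff $x\circ y\perp\mathsf{t}$; (d) $x\perp\mathsf{t}$ iff $x^{*}\perp\mathsf{f}$; (e) $x\perp\mathsf{f}$ and $y\perp\mathsf{f}$ iff $x\otimes y\perp\mathsf{f}$; (f) $(x\circ y^{*})^{*}\perp(x\circ y)^{*}$; (g) $x\perp y$ and $x\perp\mathsf{f}$ imply $y\perp\mathsf{t}$; (h) $(x\not\Leftrightarrow y\not\Leftrightarrow z)\perp((x\Rightarrow y)\Rightarrow((y\Rightarrow z)\Rightarrow(x\Rightarrow z)))^{*}$. $\mathfrak{N}_w^{d}$ ($\mathfrak{N}^{d}$) is the class of $\mathfrak{N}_w$-models (with $\mathbf A$ an $\mathcal{N}$-algebra) satisfying: for all $x,y\in A$, $x\perp\mathsf{f}$ implies $x\oplus y\perp\mathsf{f}$. $F_\perp=\{a\in A:a\perp\mathsf{f}\}$. For a class $K$: $\Gamma\models_K\varphi$ iff there is a finite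 $\Gamma'\subseteq\Gamma$ such that for all models in $K$ and homomorphisms $h:\mathbf{Fm}\to\mathbf A$, $h(\Gamma')\subseteq F_\perp$ implies $h(\varphi)\in F_\perp$; $\models_K\varphi$ iff $h(\varphi)\perp\mathsf{f}$ for all models in $K$ and all $h$. *)

theory Defs
  imports Main
begin

text \<open>Formulas over countably many variables (indexed by nat), with binary
  otimes (Ot), circ (Ci) and unary star (St).\<close>

datatype fm = Var nat | Ot fm fm | Ci fm fm | St fm

definition fimp :: "fm \<Rightarrow> fm \<Rightarrow> fm" where
  "fimp a b = St (Ci a (St b))"
definition fiff :: "fm \<Rightarrow> fm \<Rightarrow> fm" where
  "fiff a b = Ot (fimp a b) (fimp b a)"
definition fniff :: "fm \<Rightarrow> fm \<Rightarrow> fm" where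
  "fniff a b = St (fiff a b)"
definition fniff3 :: "fm \<Rightarrow> fm \<Rightarrow> fm \<Rightarrow> fm" where
  "fniff3 a b c = Ot (Ot (fniff a b) (fniff a c)) (fniff b c)"
definition foplus :: "fm \<Rightarrow> fm \<Rightarrow> fm" where
  "foplus a b = St (Ot (St a) (St b))"

inductive Ax :: "fm \<Rightarrow> bool" where
  A1: "Ax (fimp p p)"
| A2: "Ax (fimp (Ci p q) (Ci q p))"
| A3: "Ax (fimp p (St (St p)))"
| A4: "Ax (fimp (fimp p q) (Ci p q))"
| A5: "Ax (fiff (Ot p q) (Ot q p))"
| A6: "Ax (fimp (fimp (Ot p q) r) (fimp (Ot p (St r)) (St q)))"
| A7: "Ax (fimp (fniff3 p q r) (fimp (fimp p q) (fimp (fimp q r) (fimp p r))))"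

inductive AsAx :: "fm \<Rightarrow> bool" where
  as1: "AsAx (fimp (Ot (Ot p q) r) (Ot p (Ot q r)))"
| as2: "AsAx (fimp (Ot p (Ot q r)) (Ot (Ot p q) r))"

text \<open>repl p q b c c': c' arises from c by replacing some occurrences of p by q;
  the flag b is True iff at least one occurrence was replaced.\<close>

inductive repl :: "fm \<Rightarrow> fm \<Rightarrow> bool \<Rightarrow> fm \<Rightarrow> fm \<Rightarrow> bool" for p q where
  keep: "repl p q False c c"
| here: "repl p q True p q"
| ot: "repl p q b1 a a' \<Longrightarrow> repl p q b2 c c' \<Longrightarrow> repl p q (b1 \<or> b2) (Ot a c) (Ot a' c')"
| ci: "repl p q b1 a a' \<Longrightarrow> repl p q b2 c c' \<Longrightarrow> repl p q (b1 \<or> b2) (Ci a c) (Ci a' c')"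
| st: "repl p q b a a' \<Longrightarrow> repl p q b (St a) (St a')"

text \<open>NeL_DI as Gamma phi: phi is derivable from Gamma in NeL + (DI)^s
  (NeL^as + (DI)^s when as = True); all rules apply to arbitrary formulas.\<close>

inductive NeL_DI :: "bool \<Rightarrow> fm set \<Rightarrow> fm \<Rightarrow> bool" for as :: bool and \<Gamma> :: "fm set" where
  hyp: "p \<in> \<Gamma> \<Longrightarrow> NeL_DI as \<Gamma> p"
| ax: "Ax p \<Longrightarrow> NeL_DI as \<Gamma> p"
| axas: "as \<Longrightarrow> AsAx p \<Longrightarrow> NeL_DI as \<Gamma> p"
| mp: "NeL_DI as \<Gamma> (fimp p q) \<Longrightarrow> NeL_DI as \<Gamma> p \<Longrightarrow> NeL_DI as \<Gamma> q"
| adj: "NeL_DI as \<Gamma> p \<Longrightarrow> NeL_DI as \<Gamma> q \<Longrightarrow> NeL_DI as \<Gamma> (Ot p q)"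
| rep: "NeL_DI as \<Gamma> (fiff p q) \<Longrightarrow> NeL_DI as \<Gamma> c \<Longrightarrow> repl p q True c c'
        \<Longrightarrow> NeL_DI as \<Gamma> c'"
| simpl: "NeL_DI as \<Gamma> (Ot p q) \<Longrightarrow> NeL_DI as \<Gamma> p"
| DIs: "NeL_DI as \<Gamma> p \<Longrightarrow> NeL_DI as \<Gamma> (foplus p q)"

text \<open>Theorems of NL + (DI) (NL^as + (DI) when as = True): the rules are applied
  only to theorems, i.e. derivations with no hypotheses.\<close>

inductive NL_DI_thm :: "bool \<Rightarrow> fm \<Rightarrow> bool" for as :: bool where
  ax: "Ax p \<Longrightarrow> NL_DI_thm as p"
| axas: "as \<Longrightarrow> AsAx p \<Longrightarrow> NL_DI_thm as p"
| mp: "NL_DI_thm as (fimp p q) \<Longrightarrow> NL_DI_thm as p \<Longrightarrow> NL_DI_thm as q"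
| adj: "NL_DI_thm as p \<Longrightarrow> NL_DI_thm as q \<Longrightarrow> NL_DI_thm as (Ot p q)"
| rep: "NL_DI_thm as (fiff p q) \<Longrightarrow> NL_DI_thm as c \<Longrightarrow> repl p q True c c'
        \<Longrightarrow> NL_DI_thm as c'"
| simpl: "NL_DI_thm as (Ot p q) \<Longrightarrow> NL_DI_thm as p"
| DI: "NL_DI_thm as p \<Longrightarrow> NL_DI_thm as (foplus p q)"

text \<open>Extended carrier: A together with two fresh symbols t (TT) and f (FF).\<close>
datatype 'a ext = El 'a | TT | FF

record 'a nmodel =
  car :: "'a set"
  otm :: "'a \<Rightarrow> 'a \<Rightarrow> 'a"
  cim :: "'a \<Rightarrow> 'a \<Rightarrow> 'a"
  stm :: "'a \<Rightarrow> 'a"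
  perp :: "'a ext \<Rightarrow> 'a ext \<Rightarrow> bool"

definition mimp :: "'a nmodel \<Rightarrow> 'a \<Rightarrow> 'a \<Rightarrow> 'a" where
  "mimp M x y = stm M (cim M x (stm M y))"
definition miff :: "'a nmodel \<Rightarrow> 'a \<Rightarrow> 'a \<Rightarrow> 'a" where
  "miff M x y = otm M (mimp M x y) (mimp M y x)"
definition mniff :: "'a nmodel \<Rightarrow> 'a \<Rightarrow> 'a \<Rightarrow> 'a" where
  "mniff M x y = stm M (miff M x y)"
definition mniff3 :: "'a nmodel \<Rightarrow> 'a \<Rightarrow> 'a \<Rightarrow> 'a \<Rightarrow> 'a" where
  "mniff3 M x y z = otm M (otm M (mniff M x y) (mniff M x z)) (mniff M y z)"
definition moplus :: "'a nmodel \<Rightarrow> 'a \<Rightarrow> 'a \<Rightarrow> 'a" where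
  "moplus M x y = stm M (otm M (stm M x) (stm M y))"

definition weak_N_alg :: "'a nmodel \<Rightarrow> bool" where
  "weak_N_alg M \<longleftrightarrow>
     (\<forall>x\<in>car M. \<forall>y\<in>car M. otm M x y \<in> car M \<and> cim M x y \<in> car M) \<and>
     (\<forall>x\<in>car M. stm M x \<in> car M) \<and>
     (\<forall>x\<in>car M. \<forall>y\<in>car M. otm M x y = otm M y x \<and> cim M x y = cim M y x) \<and>
     (\<forall>x\<in>car M. stm M (stm M x) = x) \<and>
     (\<forall>x\<in>car M. \<forall>y\<in>car M. \<forall>z\<in>car M. cim M (otm M x y) z = cim M (otm M x z) y)"

definition N_alg :: "'a nmodel \<Rightarrow> bool" where
  "N_alg M \<longleftrightarrow> weak_N_alg M \<and>
     (\<forall>x\<in>car M. \<forall>y\<in>car M. \<forall>z\<in>car M. otm M (otm M x y) z = otm M x (otm M y z))"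

definition Nw_model :: "'a nmodel \<Rightarrow> bool" where
  "Nw_model M \<longleftrightarrow> weak_N_alg M \<and>
   (\<forall>x\<in>car M. \<forall>y\<in>car M. \<forall>z\<in>car M.
      perp M (El x) (El (stm M x)) \<and>
      (perp M (El x) (El (stm M y)) \<and> perp M (El y) (El (stm M x)) \<longrightarrow> x = y) \<and>
      (perp M (El x) (El y) \<longleftrightarrow> perp M (El (cim M x y)) TT) \<and>
      (perp M (El x) TT \<longleftrightarrow> perp M (El (stm M x)) FF) \<and>
      (perp M (El x) FF \<and> perp M (El y) FF \<longleftrightarrow> perp M (El (otm M x y)) FF) \<and>
      perp M (El (stm M (cim M x (stm M y)))) (El (stm M (cim M x y))) \<and>
      (perp M (El x) (El y) \<and> perp M (El x) FF \<longrightarrow> perp M (El y) TT) \<and>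
      perp M (El (mniff3 M x y z))
             (El (stm M (mimp M (mimp M x y) (mimp M (mimp M y z) (mimp M x z))))))"

definition Nwd :: "'a nmodel \<Rightarrow> bool" where
  "Nwd M \<longleftrightarrow> Nw_model M \<and>
     (\<forall>x\<in>car M. \<forall>y\<in>car M. perp M (El x) FF \<longrightarrow> perp M (El (moplus M x y)) FF)"

definition Nd :: "'a nmodel \<Rightarrow> bool" where
  "Nd M \<longleftrightarrow> Nwd M \<and> N_alg M"

definition Fperp :: "'a nmodel \<Rightarrow> 'a set" where
  "Fperp M = {a \<in> car M. perp M (El a) FF}"

definition is_hom :: "'a nmodel \<Rightarrow> (fm \<Rightarrow> 'a) \<Rightarrow> bool" where
  "is_hom M h \<longleftrightarrow> (\<forall>n. h (Var n) \<in> car M) \<and>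
     (\<forall>a b. h (Ot a b) = otm M (h a) (h b)) \<and>
     (\<forall>a b. h (Ci a b) = cim M (h a) (h b)) \<and>
     (\<forall>a. h (St a) = stm M (h a))"

definition conseq :: "('a nmodel \<Rightarrow> bool) \<Rightarrow> fm set \<Rightarrow> fm \<Rightarrow> bool" where
  "conseq K \<Gamma> p \<longleftrightarrow> (\<exists>\<Gamma>'. finite \<Gamma>' \<and> \<Gamma>' \<subseteq> \<Gamma> \<and>
     (\<forall>M h. K M \<longrightarrow> is_hom M h \<longrightarrow> h ` \<Gamma>' \<subseteq> Fperp M \<longrightarrow> h p \<in> Fperp M))"

definition valid :: "('a nmodel \<Rightarrow> bool) \<Rightarrow> fm \<Rightarrow> bool" where
  "valid K p \<longleftrightarrow> (\<forall>M h. K M \<longrightarrow> is_hom M h \<longrightarrow> perp M (El (h p)) FF)"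

end

theory Submission
  imports Defs "HOL-Library.Countable"
begin

text \<open>Soundness: under any homomorphism into an N_w-model the axioms are designated,
  (A2), (A3), (A5), (A6) because both sides of the implication denote the same element
  (for (A6) by the exchange law), and (A1), (A4), (A7) by conditions (a), (f), (h);
  conditions (b), (e), (g) make the rules preserve designation, \<open>(DI)\<^sup>s\<close> needs the extra
  condition of \<open>Nwd\<close>, and the associativity axioms need \<open>\<otimes>\<close> to be associative.
  A derivation uses only finitely many hypotheses, which provides the finite \<open>\<Gamma>'\<close>.

  Completeness: formulas modulo provable equivalence \<open>\<Gamma> \<turnstile> \<phi> \<Leftrightarrow> \<psi>\<close> form a
  weak N-algebra (an N-algebra in the associative case), and
  \<open>x \<perp> y\<close> iff \<open>\<Gamma> \<turnstile> (x \<circ> y)\<^sup>*\<close>, \<open>x \<perp> t\<close> iff \<open>\<Gamma> \<turnstile> x\<^sup>*\<close>, \<open>x \<perp> f\<close> iff \<open>\<Gamma> \<turnstile> x\<close>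
  makes it a model of the right class in which the canonical valuation designates exactly the
  formulas derivable from \<open>\<Gamma>\<close>. The quotient is countable, so it can be realised inside
  any infinite carrier type. Theorems of the hypothesis-free calculus are the derivations
  from \<open>{}\<close>, and validity is consequence from \<open>{}\<close>.\<close>

abbreviation designated :: "'a nmodel \<Rightarrow> 'a \<Rightarrow> bool" where
  "designated M x \<equiv> perp M (El x) FF"

lemma hom_in_car: "weak_N_alg M \<Longrightarrow> is_hom M h \<Longrightarrow> h p \<in> car M"
  by (induction p) (auto simp: weak_N_alg_def is_hom_def)

lemma hom_simps:
  assumes "is_hom M h"
  shows "h (Ot a b) = otm M (h a) (h b)" "h (Ci a b) = cim M (h a) (h b)" "h (St a) = stm M (h a)"
    "h (fimp a b) = mimp M (h a) (h b)" "h (fiff a b) = miff M (h a) (h b)"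
    "h (fniff a b) = mniff M (h a) (h b)" "h (fniff3 a b c) = mniff3 M (h a) (h b) (h c)"
    "h (foplus a b) = moplus M (h a) (h b)"
  using assms by (auto simp: is_hom_def fimp_def mimp_def fiff_def miff_def fniff_def mniff_def
      fniff3_def mniff3_def foplus_def moplus_def)

lemma hom_repl_eq: "repl p q b c c' \<Longrightarrow> is_hom M h \<Longrightarrow> h p = h q \<Longrightarrow> h c = h c'"
  by (induction rule: repl.induct) (auto simp: is_hom_def)

lemma repl_False_eq: "repl p q b c c' \<Longrightarrow> \<not> b \<Longrightarrow> c' = c"
  by (induction rule: repl.induct) auto

context
  fixes M :: "'a nmodel"
  assumes model: "Nw_model M"
begin

lemma Nw_model_weak_N_alg: "weak_N_alg M"
  using model by (simp add: Nw_model_def)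

lemma ops_closed:
  "x \<in> car M \<Longrightarrow> y \<in> car M \<Longrightarrow> otm M x y \<in> car M"
  "x \<in> car M \<Longrightarrow> y \<in> car M \<Longrightarrow> cim M x y \<in> car M"
  "x \<in> car M \<Longrightarrow> stm M x \<in> car M"
  "x \<in> car M \<Longrightarrow> y \<in> car M \<Longrightarrow> mimp M x y \<in> car M"
  using Nw_model_weak_N_alg by (auto simp: weak_N_alg_def mimp_def)

lemma ops_laws:
  "x \<in> car M \<Longrightarrow> y \<in> car M \<Longrightarrow> otm M x y = otm M y x"
  "x \<in> car M \<Longrightarrow> y \<in> car M \<Longrightarrow> cim M x y = cim M y x"
  "x \<in> car M \<Longrightarrow> stm M (stm M x) = x"
  "x \<in> car M \<Longrightarrow> y \<in> car M \<Longrightarrow> z \<in> car M \<Longrightarrow> cim M (otm M x y) z = cim M (otm M x z) y"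
  using Nw_model_weak_N_alg by (auto simp: weak_N_alg_def)

lemma perp_conditions:
  shows perp_stm: "x \<in> car M \<Longrightarrow> perp M (El x) (El (stm M x))"
    and perp_stm_antisym: "x \<in> car M \<Longrightarrow> y \<in> car M \<Longrightarrow>
      perp M (El x) (El (stm M y)) \<Longrightarrow> perp M (El y) (El (stm M x)) \<Longrightarrow> x = y"
    and perp_iff_cim_perp_TT: "x \<in> car M \<Longrightarrow> y \<in> car M \<Longrightarrow>
      perp M (El x) (El y) \<longleftrightarrow> perp M (El (cim M x y)) TT"
    and perp_TT_iff_stm_designated: "x \<in> car M \<Longrightarrow>
      perp M (El x) TT \<longleftrightarrow> designated M (stm M x)"
    and designated_otm_iff: "x \<in> car M \<Longrightarrow> y \<in> car M \<Longrightarrow>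
      designated M (otm M x y) \<longleftrightarrow> designated M x \<and> designated M y"
    and perp_A4: "x \<in> car M \<Longrightarrow> y \<in> car M \<Longrightarrow>
      perp M (El (stm M (cim M x (stm M y)))) (El (stm M (cim M x y)))"
    and perp_designated_TT: "x \<in> car M \<Longrightarrow> y \<in> car M \<Longrightarrow>
      perp M (El x) (El y) \<Longrightarrow> designated M x \<Longrightarrow> perp M (El y) TT"
    and perp_A7: "x \<in> car M \<Longrightarrow> y \<in> car M \<Longrightarrow> z \<in> car M \<Longrightarrow>
      perp M (El (mniff3 M x y z))
        (El (stm M (mimp M (mimp M x y) (mimp M (mimp M y z) (mimp M x z)))))"
  using model unfolding Nw_model_def by blast+

lemma designated_mimp_iff:
  "x \<in> car M \<Longrightarrow> y \<in> car M \<Longrightarrow> designated M (mimp M x y) \<longleftrightarrow> perp M (El x) (El (stm M y))"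
  unfolding mimp_def by (metis ops_closed perp_iff_cim_perp_TT perp_TT_iff_stm_designated)

lemma designated_mimp_refl: "x \<in> car M \<Longrightarrow> designated M (mimp M x x)"
  by (simp add: designated_mimp_iff perp_stm)

lemma designated_mp:
  assumes "x \<in> car M" "y \<in> car M" "designated M (mimp M x y)" "designated M x"
  shows "designated M y"
proof -
  have "perp M (El (stm M y)) TT"
    using assms by (simp add: designated_mimp_iff perp_designated_TT ops_closed)
  then show ?thesis
    using assms by (simp add: perp_TT_iff_stm_designated ops_closed ops_laws)
qed

lemma designated_miff_eq:
  assumes "x \<in> car M" "y \<in> car M" "designated M (miff M x y)"
  shows "x = y"
  using assms perp_stm_antisym
  by (simp add: miff_def designated_otm_iff designated_mimp_iff ops_closed)

lemma Ax_designated: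
  assumes h: "is_hom M h" and "Ax f"
  shows "designated M (h f)"
proof -
  have c: "\<And>p. h p \<in> car M"
    using hom_in_car[OF Nw_model_weak_N_alg h] .
  note hom = hom_simps[OF h]
  show ?thesis using \<open>Ax f\<close>
  proof cases
    case (A1 p)
    then show ?thesis by (simp add: hom c designated_mimp_refl)
  next
    case (A2 p q)
    then show ?thesis
      using designated_mimp_refl ops_laws(2) by (simp add: hom c ops_closed)
  next
    case (A3 p)
    then show ?thesis by (simp add: hom c ops_laws(3) designated_mimp_refl)
  next
    case (A4 p q)
    then show ?thesis
      using perp_A4[OF c c]
      by (simp add: hom c ops_closed designated_mimp_iff mimp_def[symmetric])
  next
    case (A5 p q)
    then show ?thesis
      using designated_mimp_refl ops_laws(1)
      by (simp add: hom c ops_closed miff_def designated_otm_iff)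
  next
    case (A6 p q r)
    have "mimp M (otm M (h p) (stm M (h r))) (stm M (h q)) = mimp M (otm M (h p) (h q)) (h r)"
      unfolding mimp_def using c ops_closed ops_laws by metis
    then show ?thesis
      using A6 by (simp add: hom c ops_closed designated_mimp_refl)
  next
    case (A7 p q r)
    have "perp M (El (h (fniff3 p q r)))
        (El (stm M (h (fimp (fimp p q) (fimp (fimp q r) (fimp p r))))))"
      using perp_A7[OF c c c] by (simp add: hom)
    then show ?thesis
      using A7 designated_mimp_iff[OF c c] hom(4) by metis
  qed
qed

lemma AsAx_designated:
  assumes "N_alg M" "is_hom M h" "AsAx f"
  shows "designated M (h f)"
proof -
  have c: "\<And>p. h p \<in> car M"
    using hom_in_car[OF Nw_model_weak_N_alg assms(2)] .
  have assoc: "h (Ot (Ot p q) r) = h (Ot p (Ot q r))" for p q r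
    using assms(1) by (simp add: hom_simps[OF assms(2)] N_alg_def c)
  from \<open>AsAx f\<close> show ?thesis
    by cases (simp_all only: hom_simps(4)[OF assms(2)] assoc designated_mimp_refl c)
qed

end

lemma NeL_DI_sound:
  assumes "NeL_DI as \<Gamma> f" and M: "Nwd M" "as \<Longrightarrow> N_alg M"
    and h: "is_hom M h" "h ` \<Gamma> \<subseteq> Fperp M"
  shows "designated M (h f)"
proof -
  have model: "Nw_model M"
    using M(1) by (simp add: Nwd_def)
  have c: "\<And>p. h p \<in> car M"
    using hom_in_car[OF Nw_model_weak_N_alg[OF model] h(1)] .
  note hom = hom_simps[OF h(1)]
  from assms(1) show ?thesis
  proof (induction rule: NeL_DI.induct)
    case (hyp p)
    then show ?case using h(2) by (auto simp: Fperp_def)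
  next
    case (ax p)
    then show ?case by (rule Ax_designated[OF model h(1)])
  next
    case (axas p)
    then show ?case by (intro AsAx_designated[OF model M(2) h(1)])
  next
    case (mp p q)
    then show ?case using designated_mp[OF model c c] by (simp add: hom)
  next
    case (adj p q)
    then show ?case by (simp add: hom designated_otm_iff[OF model c c])
  next
    case (rep p q c' c'')
    then have "h p = h q"
      using designated_miff_eq[OF model c c] by (simp add: hom)
    then show ?case
      using rep hom_repl_eq[OF _ h(1)] by metis
  next
    case (simpl p q)
    then show ?case by (simp add: hom designated_otm_iff[OF model c c])
  next
    case (DIs p q)
    then show ?case using M(1) c by (simp add: hom Nwd_def)
  qed
qed

lemma NeL_DI_mono: "NeL_DI as \<Gamma> f \<Longrightarrow> \<Gamma> \<subseteq> \<Delta> \<Longrightarrow> NeL_DI as \<Delta> f"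
  by (induction rule: NeL_DI.induct) (auto intro: NeL_DI.intros)

lemma NeL_DI_finite_hyps:
  "NeL_DI as \<Gamma> f \<Longrightarrow> \<exists>\<Gamma>'. finite \<Gamma>' \<and> \<Gamma>' \<subseteq> \<Gamma> \<and> NeL_DI as \<Gamma>' f"
proof (induction rule: NeL_DI.induct)
  case (hyp p)
  then show ?case by (intro exI[of _ "{p}"]) (auto intro: NeL_DI.hyp)
next
  case (mp p q)
  then show ?case by (meson NeL_DI.mp NeL_DI_mono finite_UnI Un_least Un_upper1 Un_upper2)
next
  case (adj p q)
  then show ?case by (meson NeL_DI.adj NeL_DI_mono finite_UnI Un_least Un_upper1 Un_upper2)
next
  case (rep p q c c')
  then show ?case by (meson NeL_DI.rep NeL_DI_mono finite_UnI Un_least Un_upper1 Un_upper2)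
qed (auto intro: NeL_DI.intros)

lemma NeL_DI_conseq:
  assumes "NeL_DI as \<Gamma> f" and K: "\<And>M. K M \<Longrightarrow> Nwd M \<and> (as \<longrightarrow> N_alg M)"
  shows "conseq K \<Gamma> f"
proof -
  obtain \<Gamma>' where \<Gamma>': "finite \<Gamma>'" "\<Gamma>' \<subseteq> \<Gamma>" "NeL_DI as \<Gamma>' f"
    using NeL_DI_finite_hyps[OF assms(1)] by blast
  have "h f \<in> Fperp M" if "K M" "is_hom M h" "h ` \<Gamma>' \<subseteq> Fperp M" for M h
  proof -
    have M: "Nwd M" "as \<Longrightarrow> N_alg M"
      using K[OF that(1)] by auto
    have "h f \<in> car M"
      using M(1) hom_in_car[OF _ that(2)] by (simp add: Nwd_def Nw_model_def)
    then show ?thesis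
      using NeL_DI_sound[OF \<Gamma>'(3) M that(2,3)] by (simp add: Fperp_def)
  qed
  then show ?thesis
    unfolding conseq_def using \<Gamma>'(1,2) by blast
qed

context
  fixes as :: bool and \<Gamma> :: "fm set"
begin

definition prov_equiv :: "fm \<Rightarrow> fm \<Rightarrow> bool" where
  "prov_equiv p q \<longleftrightarrow> NeL_DI as \<Gamma> (fiff p q)"

lemma prov_equiv_refl: "prov_equiv p p"
  unfolding prov_equiv_def fiff_def by (intro NeL_DI.adj NeL_DI.ax Ax.A1)

lemma derivable_repl:
  assumes "prov_equiv p q" "repl p q b c c'" "NeL_DI as \<Gamma> c"
  shows "NeL_DI as \<Gamma> c'"
proof (cases b)
  case True
  with assms(2) have "repl p q True c c'"
    by simp
  with assms(1,3) show ?thesis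
    unfolding prov_equiv_def by (rule NeL_DI.rep)
next
  case False
  with assms(2) have "c' = c"
    by (rule repl_False_eq)
  with assms(3) show ?thesis
    by simp
qed

lemma prov_equiv_derivable: "prov_equiv p q \<Longrightarrow> NeL_DI as \<Gamma> p \<Longrightarrow> NeL_DI as \<Gamma> q"
  by (erule derivable_repl) (rule repl.here)

lemma prov_equiv_repl:
  assumes "prov_equiv p q" "repl p q b c c'"
  shows "prov_equiv c c'"
proof -
  have "repl p q ((False \<or> b) \<or> (b \<or> False)) (fiff c c) (fiff c c')"
    unfolding fiff_def fimp_def by (intro repl.intros assms(2))
  from derivable_repl[OF assms(1) this] show ?thesis
    using prov_equiv_refl unfolding prov_equiv_def .
qed

lemma prov_equiv_sym:
  assumes "prov_equiv p q"
  shows "prov_equiv q p"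
proof -
  have "repl p q ((True \<or> False) \<or> (False \<or> True)) (fiff p p) (fiff q p)"
    unfolding fiff_def fimp_def by (intro repl.intros)
  from derivable_repl[OF assms this] show ?thesis
    using prov_equiv_refl unfolding prov_equiv_def .
qed

lemma prov_equiv_trans:
  assumes "prov_equiv p q" "prov_equiv q r"
  shows "prov_equiv p r"
proof -
  have "repl q r ((False \<or> True) \<or> (True \<or> False)) (fiff p q) (fiff p r)"
    unfolding fiff_def fimp_def by (intro repl.intros)
  from derivable_repl[OF assms(2) this] show ?thesis
    using assms(1) unfolding prov_equiv_def .
qed

lemma prov_equiv_St: "prov_equiv a a' \<Longrightarrow> prov_equiv (St a) (St a')"
  by (erule prov_equiv_repl) (rule repl.intros)+

lemma prov_equiv_Ot:
  assumes "prov_equiv a a'" "prov_equiv b b'"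
  shows "prov_equiv (Ot a b) (Ot a' b')"
proof -
  have "prov_equiv (Ot a b) (Ot a' b)"
    using assms(1) by (rule prov_equiv_repl) (rule repl.intros)+
  moreover have "prov_equiv (Ot a' b) (Ot a' b')"
    using assms(2) by (rule prov_equiv_repl) (rule repl.intros)+
  ultimately show ?thesis
    by (rule prov_equiv_trans)
qed

lemma prov_equiv_Ci:
  assumes "prov_equiv a a'" "prov_equiv b b'"
  shows "prov_equiv (Ci a b) (Ci a' b')"
proof -
  have "prov_equiv (Ci a b) (Ci a' b)"
    using assms(1) by (rule prov_equiv_repl) (rule repl.intros)+
  moreover have "prov_equiv (Ci a' b) (Ci a' b')"
    using assms(2) by (rule prov_equiv_repl) (rule repl.intros)+
  ultimately show ?thesis
    by (rule prov_equiv_trans)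
qed

lemma prov_equiv_derivable_iff: "prov_equiv p q \<Longrightarrow> NeL_DI as \<Gamma> p \<longleftrightarrow> NeL_DI as \<Gamma> q"
  using prov_equiv_derivable prov_equiv_sym by blast

lemma prov_equiv_if_fimp:
  "NeL_DI as \<Gamma> (fimp p q) \<Longrightarrow> NeL_DI as \<Gamma> (fimp q p) \<Longrightarrow> prov_equiv p q"
  unfolding prov_equiv_def fiff_def by (rule NeL_DI.adj)

lemma prov_equiv_Ot_commute: "prov_equiv (Ot p q) (Ot q p)"
  unfolding prov_equiv_def by (intro NeL_DI.ax Ax.A5)

lemma prov_equiv_Ci_commute: "prov_equiv (Ci p q) (Ci q p)"
  by (intro prov_equiv_if_fimp NeL_DI.ax Ax.A2)

lemma prov_equiv_St_St: "prov_equiv (St (St p)) p"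
proof (rule prov_equiv_if_fimp)
  have "prov_equiv (fimp (St p) (St p)) (fimp (St (St p)) p)"
    unfolding fimp_def by (intro prov_equiv_St prov_equiv_Ci_commute)
  then show "NeL_DI as \<Gamma> (fimp (St (St p)) p)"
    by (rule prov_equiv_derivable) (intro NeL_DI.ax Ax.A1)
  show "NeL_DI as \<Gamma> (fimp p (St (St p)))"
    by (intro NeL_DI.ax Ax.A3)
qed

lemma prov_equiv_fimp_St: "prov_equiv (fimp p (St q)) (St (Ci p q))"
  unfolding fimp_def by (intro prov_equiv_St prov_equiv_Ci prov_equiv_refl prov_equiv_St_St)

lemma prov_equiv_exchange: "prov_equiv (Ci (Ot x y) z) (Ci (Ot x z) y)"
proof -
  have "NeL_DI as \<Gamma> (fimp (St (Ci (Ot x y) z)) (St (Ci (Ot x z) y)))" for x y z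
  proof -
    have "prov_equiv (fimp (fimp (Ot x y) (St z)) (fimp (Ot x (St (St z))) (St y)))
        (fimp (St (Ci (Ot x y) z)) (St (Ci (Ot x z) y)))"
      unfolding fimp_def by (intro prov_equiv_St prov_equiv_Ci prov_equiv_Ot prov_equiv_refl
          prov_equiv_St_St prov_equiv_fimp_St[unfolded fimp_def])
    then show ?thesis
      by (rule prov_equiv_derivable) (intro NeL_DI.ax Ax.A6)
  qed
  then have "prov_equiv (St (St (Ci (Ot x y) z))) (St (St (Ci (Ot x z) y)))"
    by (intro prov_equiv_St prov_equiv_if_fimp)
  then show ?thesis
    using prov_equiv_St_St prov_equiv_sym prov_equiv_trans by meson
qed

lemma prov_equiv_Ot_assoc: "as \<Longrightarrow> prov_equiv (Ot (Ot p q) r) (Ot p (Ot q r))"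
  unfolding prov_equiv_def fiff_def by (intro NeL_DI.adj NeL_DI.axas AsAx.intros)

lemma derivable_Ot_iff: "NeL_DI as \<Gamma> (Ot p q) \<longleftrightarrow> NeL_DI as \<Gamma> p \<and> NeL_DI as \<Gamma> q"
  using NeL_DI.adj NeL_DI.simpl prov_equiv_derivable[OF prov_equiv_Ot_commute] by blast

lemma derivable_St_if_St_Ci:
  assumes "NeL_DI as \<Gamma> (St (Ci p q))" "NeL_DI as \<Gamma> p"
  shows "NeL_DI as \<Gamma> (St q)"
proof (rule NeL_DI.mp[OF _ assms(2)])
  show "NeL_DI as \<Gamma> (fimp p (St q))"
    using prov_equiv_fimp_St assms(1) prov_equiv_derivable_iff by blast
qed

text \<open>The quotient by \<open>prov_equiv\<close> is represented by chosen representatives and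
  transported into \<open>'a\<close> along an injection \<open>e\<close>; \<open>inv e\<close> recovers the representative,
  and its junk values outside the range of \<open>e\<close> are never used.\<close>

definition class_rep :: "fm \<Rightarrow> fm" where
  "class_rep p = (SOME q. prov_equiv p q)"

definition canonical_hom :: "(fm \<Rightarrow> 'a) \<Rightarrow> fm \<Rightarrow> 'a" where
  "canonical_hom e p = e (class_rep p)"

definition canonical_model :: "(fm \<Rightarrow> 'a) \<Rightarrow> 'a nmodel" where
  "canonical_model e =
    \<lparr>car = range (canonical_hom e),
     otm = \<lambda>x y. canonical_hom e (Ot (inv e x) (inv e y)),
     cim = \<lambda>x y. canonical_hom e (Ci (inv e x) (inv e y)),
     stm = \<lambda>x. canonical_hom e (St (inv e x)),
     perp = \<lambda>u v. case (u, v) of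
        (El x, El y) \<Rightarrow> NeL_DI as \<Gamma> (St (Ci (inv e x) (inv e y)))
      | (El x, TT) \<Rightarrow> NeL_DI as \<Gamma> (St (inv e x))
      | (El x, FF) \<Rightarrow> NeL_DI as \<Gamma> (inv e x)
      | _ \<Rightarrow> False\<rparr>"

lemma prov_equiv_class_rep: "prov_equiv (class_rep p) p"
  unfolding class_rep_def by (rule prov_equiv_sym, rule someI, rule prov_equiv_refl)

lemma class_rep_eq:
  assumes "prov_equiv p q"
  shows "class_rep p = class_rep q"
proof -
  have "prov_equiv p = prov_equiv q"
    using prov_equiv_trans[OF prov_equiv_sym[OF assms]] prov_equiv_trans[OF assms]
    by (intro ext) blast
  then show ?thesis
    unfolding class_rep_def by simp
qed

lemma canonical_hom_eq: "prov_equiv p q \<Longrightarrow> canonical_hom e p = canonical_hom e q"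
  by (simp add: canonical_hom_def class_rep_eq)

context
  fixes e :: "fm \<Rightarrow> 'a"
  assumes inj: "inj e"
begin

lemma inv_canonical_hom: "inv e (canonical_hom e p) = class_rep p"
  using inj by (simp add: canonical_hom_def)

lemma canonical_model_car: "car (canonical_model e) = range (canonical_hom e)"
  by (simp add: canonical_model_def)

lemma canonical_model_ops:
  "otm (canonical_model e) (canonical_hom e p) (canonical_hom e q) = canonical_hom e (Ot p q)"
  "cim (canonical_model e) (canonical_hom e p) (canonical_hom e q) = canonical_hom e (Ci p q)"
  "stm (canonical_model e) (canonical_hom e p) = canonical_hom e (St p)"
  by (simp_all add: canonical_model_def inv_canonical_hom)
    (rule canonical_hom_eq, intro prov_equiv_Ot prov_equiv_Ci prov_equiv_St prov_equiv_class_rep)+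

lemma canonical_model_perp:
  "perp (canonical_model e) (El (canonical_hom e p)) (El (canonical_hom e q))
     \<longleftrightarrow> NeL_DI as \<Gamma> (St (Ci p q))"
  "perp (canonical_model e) (El (canonical_hom e p)) TT \<longleftrightarrow> NeL_DI as \<Gamma> (St p)"
  "perp (canonical_model e) (El (canonical_hom e p)) FF \<longleftrightarrow> NeL_DI as \<Gamma> p"
  by (simp_all add: canonical_model_def inv_canonical_hom)
    (intro prov_equiv_derivable_iff prov_equiv_Ci prov_equiv_St prov_equiv_class_rep)+

lemma canonical_is_hom: "is_hom (canonical_model e) (canonical_hom e)"
  unfolding is_hom_def by (simp add: canonical_model_car canonical_model_ops)

lemmas canonical_model_derived_ops = hom_simps(4-8)[OF canonical_is_hom, symmetric]

lemma canonical_weak_N_alg: "weak_N_alg (canonical_model e)"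
  unfolding weak_N_alg_def canonical_model_car
  by (simp add: canonical_model_ops)
    (intro allI conjI canonical_hom_eq prov_equiv_Ot_commute prov_equiv_Ci_commute
      prov_equiv_St_St prov_equiv_exchange)

lemma canonical_Nw_model: "Nw_model (canonical_model e)"
  unfolding Nw_model_def
proof (simp only: canonical_weak_N_alg canonical_model_car ball_simps, intro allI conjI impI TrueI)
  fix p q r
  let ?h = "canonical_hom e" and ?M = "canonical_model e"
  note simps = canonical_model_ops canonical_model_perp canonical_model_derived_ops
  show "perp ?M (El (?h p)) (El (stm ?M (?h p)))"
    using NeL_DI.ax[OF Ax.A1[of p]] by (simp add: simps fimp_def)
  show "?h p = ?h q"
    if "perp ?M (El (?h p)) (El (stm ?M (?h q))) \<and> perp ?M (El (?h q)) (El (stm ?M (?h p)))"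
    using that by (simp add: simps canonical_hom_eq prov_equiv_if_fimp fimp_def[symmetric])
  show "perp ?M (El (?h p)) (El (?h q)) \<longleftrightarrow> perp ?M (El (cim ?M (?h p) (?h q))) TT"
    by (simp add: simps)
  show "perp ?M (El (?h p)) TT \<longleftrightarrow> designated ?M (stm ?M (?h p))"
    by (simp add: simps)
  show "designated ?M (?h p) \<and> designated ?M (?h q) \<longleftrightarrow> designated ?M (otm ?M (?h p) (?h q))"
    by (simp add: simps derivable_Ot_iff)
  show "perp ?M (El (stm ?M (cim ?M (?h p) (stm ?M (?h q))))) (El (stm ?M (cim ?M (?h p) (?h q))))"
    using NeL_DI.ax[OF Ax.A4[of p q]] by (simp add: simps fimp_def)
  show "perp ?M (El (?h q)) TT"
    if "perp ?M (El (?h p)) (El (?h q)) \<and> designated ?M (?h p)"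
    using that by (auto simp: simps intro: derivable_St_if_St_Ci)
  show "perp ?M (El (mniff3 ?M (?h p) (?h q) (?h r)))
      (El (stm ?M (mimp ?M (mimp ?M (?h p) (?h q)) (mimp ?M (mimp ?M (?h q) (?h r)) (mimp ?M (?h p) (?h r))))))"
    using NeL_DI.ax[OF Ax.A7[of p q r]] by (simp add: simps fimp_def[of "fniff3 p q r"])
qed

lemma canonical_Nwd: "Nwd (canonical_model e)"
  unfolding Nwd_def canonical_model_car
  by (simp add: canonical_Nw_model canonical_model_perp canonical_model_derived_ops NeL_DI.DIs)

lemma canonical_Nd:
  assumes as
  shows "Nd (canonical_model e)"
  unfolding Nd_def N_alg_def canonical_model_car
  by (simp add: canonical_Nwd canonical_weak_N_alg canonical_model_ops)
    (intro allI canonical_hom_eq prov_equiv_Ot_assoc[OF \<open>as\<close>])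

lemma canonical_Fperp_iff: "canonical_hom e p \<in> Fperp (canonical_model e) \<longleftrightarrow> NeL_DI as \<Gamma> p"
  by (simp add: Fperp_def canonical_model_car canonical_model_perp)

lemma NeL_DI_if_conseq:
  assumes "conseq K \<Gamma> f" "K (canonical_model e)"
  shows "NeL_DI as \<Gamma> f"
proof -
  obtain \<Gamma>' where sub: "\<Gamma>' \<subseteq> \<Gamma>" and
    entails: "\<And>M h. K M \<Longrightarrow> is_hom M h \<Longrightarrow> h ` \<Gamma>' \<subseteq> Fperp M \<Longrightarrow> h f \<in> Fperp M"
    using assms(1) unfolding conseq_def by blast
  from sub have "canonical_hom e ` \<Gamma>' \<subseteq> Fperp (canonical_model e)"
    by (auto simp: canonical_Fperp_iff intro!: NeL_DI.hyp)
  then show ?thesis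
    using entails[OF assms(2) canonical_is_hom] by (simp add: canonical_Fperp_iff)
qed

end

end

lemma NeL_DI_iff_conseq:
  assumes "inj e" and K: "\<And>M. K M \<Longrightarrow> Nwd M \<and> (as \<longrightarrow> N_alg M)"
    and "K (canonical_model as \<Gamma> e)"
  shows "NeL_DI as \<Gamma> f \<longleftrightarrow> conseq K \<Gamma> f"
  using NeL_DI_conseq[OF _ K] NeL_DI_if_conseq[where K = K, OF assms(1) _ assms(3)] by blast

lemma NL_DI_thm_iff_NeL_DI: "NL_DI_thm as f \<longleftrightarrow> NeL_DI as {} f"
proof
  show "NeL_DI as {} f" if "NL_DI_thm as f"
    using that by induction (auto intro: NeL_DI.intros)
  show "NL_DI_thm as f" if "NeL_DI as {} f"
    using that by induction (auto intro: NL_DI_thm.intros)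
qed

lemma valid_iff_conseq_empty:
  assumes "\<And>M. K M \<Longrightarrow> Nwd M"
  shows "valid K f \<longleftrightarrow> conseq K {} f"
proof -
  have "h f \<in> car M" if "K M" "is_hom M h" for M h
    using assms[OF that(1)] hom_in_car[OF _ that(2)] by (simp add: Nwd_def Nw_model_def)
  then show ?thesis
    unfolding valid_def conseq_def Fperp_def by auto
qed

instance fm :: countable
  by countable_datatype

lemma inj_fm_into_infinite:
  assumes "infinite (UNIV :: 'a set)"
  obtains e :: "fm \<Rightarrow> 'a" where "inj e"
proof -
  obtain g :: "nat \<Rightarrow> 'a" where "inj g"
    using infinite_countable_subset[OF assms] by blast
  then show ?thesis
    using that[of "g \<circ> to_nat"] by (simp add: inj_compose)
qed

theorem theorem5p11:
  assumes "infinite (UNIV :: 'a set)"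
  shows "(NeL_DI False \<Gamma> \<phi> \<longleftrightarrow> conseq (Nwd :: 'a nmodel \<Rightarrow> bool) \<Gamma> \<phi>) \<and>
         (NeL_DI True \<Gamma> \<phi> \<longleftrightarrow> conseq (Nd :: 'a nmodel \<Rightarrow> bool) \<Gamma> \<phi>) \<and>
         (NL_DI_thm False \<phi> \<longleftrightarrow> valid (Nwd :: 'a nmodel \<Rightarrow> bool) \<phi>) \<and>
         (NL_DI_thm True \<phi> \<longleftrightarrow> valid (Nd :: 'a nmodel \<Rightarrow> bool) \<phi>)"
proof -
  obtain e :: "fm \<Rightarrow> 'a" where e: "inj e"
    using inj_fm_into_infinite[OF assms] .
  have weak: "NeL_DI False \<Gamma>' f \<longleftrightarrow> conseq (Nwd :: 'a nmodel \<Rightarrow> bool) \<Gamma>' f" for \<Gamma>' f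
    by (rule NeL_DI_iff_conseq[OF e]) (simp_all add: canonical_Nwd[OF e])
  have assoc: "NeL_DI True \<Gamma>' f \<longleftrightarrow> conseq (Nd :: 'a nmodel \<Rightarrow> bool) \<Gamma>' f" for \<Gamma>' f
    by (rule NeL_DI_iff_conseq[OF e]) (use canonical_Nd[OF e] in \<open>auto simp: Nd_def\<close>)
  have "valid (Nwd :: 'a nmodel \<Rightarrow> bool) \<phi> \<longleftrightarrow> conseq (Nwd :: 'a nmodel \<Rightarrow> bool) {} \<phi>"
    by (rule valid_iff_conseq_empty)
  moreover have "valid (Nd :: 'a nmodel \<Rightarrow> bool) \<phi> \<longleftrightarrow> conseq (Nd :: 'a nmodel \<Rightarrow> bool) {} \<phi>"
    by (rule valid_iff_conseq_empty) (simp add: Nd_def)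
  ultimately show ?thesis
    using weak assoc by (simp add: NL_DI_thm_iff_NeL_DI)
qed

end
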